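(* Let $\tau$ be a $\theta$-compatible stopping time with $\mathbb E_x\tau<\infty$ for all $x\in\mathbf X$, and let $\mu$ be a finite non-zero $P$-invariant Borel measure on $\mathbf X$. Then $S^\star\mu$ is a finite non-zero $Q$-invariant measure on $\mathbf X$, $S^\star\mu$ is absolutely continuous with respect to $\mu$, and $R^\star S^\star\mu=\mu$.
   Context: $\mathbf X$ complete separable metric space with Borel $\sigma$-algebra; $(X_n)$ a Markov chain, $\mathbb P_x$ its law started at $x$, $Pf(x)=\mathbb E_xf(X_1)$. $\theta$-compatible: $\mathbb P_x(\tau=0)=0$ for all $x$ and $\mathbb P_x$-a.s. $\tau\ge2\Rightarrow\tau\circ\theta=\tau-1$. For non-negative Borel $f$: $Qf(x)=\mathbb E_x[f(X_\tau)\mathbf 1_{\tau<\infty}]$, $Sf(x)=\mathbb E_x[f(X_1)\mathbf 1_{\tau=1}]$, $Rf(x)=\mathbb E_x[(f(X_0)+\dots+f(X_{\tau-1}))\mathbf 1_{\tau<\infty}]$. For a measure $m$, $S^\star m(A)=\int S\mathbf 1_A\,dm$ and $R^\star m(A)=\int R\mathbf 1_A\,dm$. A measure $m$ is $T$-invariant ($T=P$ or $Q$) if $\int T\mathbf 1_A\,dm=m(A)$ for all Borel $A$. *)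

theory Defs
  imports "HOL-Probability.Probability"
begin

abbreviation path_space :: "(nat \<Rightarrow> 'a::topological_space) measure" where
  "path_space \<equiv> PiM UNIV (\<lambda>_. borel)"

text \<open>Probability of the cylinder {X_0 in A 0, ..., X_n in A n} for the chain with
  transition kernel K started at x (finite-dimensional distributions).\<close>
fun fdd :: "('a \<Rightarrow> 'a measure) \<Rightarrow> (nat \<Rightarrow> 'a set) \<Rightarrow> nat \<Rightarrow> 'a \<Rightarrow> ennreal" where
  "fdd K A 0 x = indicator (A 0) x"
| "fdd K A (Suc n) x = indicator (A 0) x * (\<integral>\<^sup>+ y. fdd K (\<lambda>i. A (Suc i)) n y \<partial>K x)"

definition markov_kernel :: "('a::topological_space \<Rightarrow> 'a measure) \<Rightarrow> bool" where
  "markov_kernel K \<longleftrightarrow>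
     (\<forall>x. prob_space (K x) \<and> sets (K x) = sets borel) \<and>
     (\<forall>A \<in> sets borel. (\<lambda>x. emeasure (K x) A) \<in> borel_measurable borel)"

definition markov_laws :: "('a::topological_space \<Rightarrow> 'a measure) \<Rightarrow> ('a \<Rightarrow> (nat \<Rightarrow> 'a) measure) \<Rightarrow> bool" where
  "markov_laws K Px \<longleftrightarrow> markov_kernel K \<and>
     (\<forall>x. prob_space (Px x) \<and> sets (Px x) = sets path_space \<and>
        (\<forall>A n. (\<forall>i. A i \<in> sets borel) \<longrightarrow>
           emeasure (Px x) {\<omega> \<in> space path_space. \<forall>i\<le>n. \<omega> i \<in> A i} = fdd K A n x))"

text \<open>Stopping time (values in nat \<union> {\<infinity>}) for the natural filtration of the coordinate process.\<close>
definition stopping_time_nat :: "((nat \<Rightarrow> 'a::topological_space) \<Rightarrow> enat) \<Rightarrow> bool" where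
  "stopping_time_nat \<tau> \<longleftrightarrow>
     (\<forall>n::nat. {\<omega>. \<tau> \<omega> = enat n} \<in>
        sets (vimage_algebra UNIV (\<lambda>\<omega>. restrict \<omega> {..n}) (PiM {..n} (\<lambda>_. (borel :: 'a measure)))))"

definition shift :: "(nat \<Rightarrow> 'a) \<Rightarrow> (nat \<Rightarrow> 'a)" where
  "shift \<omega> = (\<lambda>n. \<omega> (Suc n))"

definition theta_compatible :: "('a \<Rightarrow> (nat \<Rightarrow> 'a) measure) \<Rightarrow> ((nat \<Rightarrow> 'a) \<Rightarrow> enat) \<Rightarrow> bool" where
  "theta_compatible Px \<tau> \<longleftrightarrow>
     (\<forall>x. emeasure (Px x) {\<omega> \<in> space (Px x). \<tau> \<omega> = 0} = 0) \<and>
     (\<forall>x. AE \<omega> in Px x. \<tau> \<omega> \<ge> 2 \<longrightarrow> \<tau> (shift \<omega>) = \<tau> \<omega> - 1)"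

definition Pop :: "('a \<Rightarrow> (nat \<Rightarrow> 'a) measure) \<Rightarrow> ('a \<Rightarrow> ennreal) \<Rightarrow> 'a \<Rightarrow> ennreal" where
  "Pop Px f x = (\<integral>\<^sup>+ \<omega>. f (\<omega> 1) \<partial>Px x)"

definition Qop :: "('a \<Rightarrow> (nat \<Rightarrow> 'a) measure) \<Rightarrow> ((nat \<Rightarrow> 'a) \<Rightarrow> enat) \<Rightarrow> ('a \<Rightarrow> ennreal) \<Rightarrow> 'a \<Rightarrow> ennreal" where
  "Qop Px \<tau> f x = (\<integral>\<^sup>+ \<omega>. f (\<omega> (the_enat (\<tau> \<omega>))) * indicator {\<omega>. \<tau> \<omega> < \<infinity>} \<omega> \<partial>Px x)"

definition Sop :: "('a \<Rightarrow> (nat \<Rightarrow> 'a) measure) \<Rightarrow> ((nat \<Rightarrow> 'a) \<Rightarrow> enat) \<Rightarrow> ('a \<Rightarrow> ennreal) \<Rightarrow> 'a \<Rightarrow> ennreal" where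
  "Sop Px \<tau> f x = (\<integral>\<^sup>+ \<omega>. f (\<omega> 1) * indicator {\<omega>. \<tau> \<omega> = 1} \<omega> \<partial>Px x)"

definition Rop :: "('a \<Rightarrow> (nat \<Rightarrow> 'a) measure) \<Rightarrow> ((nat \<Rightarrow> 'a) \<Rightarrow> enat) \<Rightarrow> ('a \<Rightarrow> ennreal) \<Rightarrow> 'a \<Rightarrow> ennreal" where
  "Rop Px \<tau> f x = (\<integral>\<^sup>+ \<omega>. (\<Sum>k < the_enat (\<tau> \<omega>). f (\<omega> k)) * indicator {\<omega>. \<tau> \<omega> < \<infinity>} \<omega> \<partial>Px x)"

definition star_fun :: "(('a::topological_space \<Rightarrow> ennreal) \<Rightarrow> 'a \<Rightarrow> ennreal) \<Rightarrow> 'a measure \<Rightarrow> 'a set \<Rightarrow> ennreal" where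
  "star_fun T m A = (\<integral>\<^sup>+ x. T (indicator A) x \<partial>m)"

definition star :: "(('a::topological_space \<Rightarrow> ennreal) \<Rightarrow> 'a \<Rightarrow> ennreal) \<Rightarrow> 'a measure \<Rightarrow> 'a measure" where
  "star T m = measure_of UNIV (sets borel) (star_fun T m)"

definition invariant :: "(('a::topological_space \<Rightarrow> ennreal) \<Rightarrow> 'a \<Rightarrow> ennreal) \<Rightarrow> 'a measure \<Rightarrow> bool" where
  "invariant T m \<longleftrightarrow> (\<forall>A \<in> sets borel. (\<integral>\<^sup>+ x. T (indicator A) x \<partial>m) = emeasure m A)"

end

theory Submission
  imports Defs
begin

text \<open>Write \<nu> = S\<star>\<mu>. For a path functional F, splitting the path at time 1 according to
  whether \<tau> = 1 and using the Markov property together with \<tau> \<circ> \<theta> = \<tau> - 1 on {\<tau> \<ge> 2} gives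
  P(E F) = S(E F) + E[1{\<tau> \<noteq> 1} F \<circ> \<theta>], where (E F)(x) = E_x F.
  For F = 1{X_\<tau> \<in> A} this reads P Q 1_A = S Q 1_A + T, while directly Q 1_A = S 1_A + T with the
  same T; integrating both against the P-invariant \<mu> and cancelling gives \<nu>(Q 1_A) = \<nu>(A).
  For F = 1{X_n \<in> A, n < \<tau>} it gives a telescoping identity
  \<mu>(A) = \<integral> a_n d\<mu> + \<Sum>_{k<n} \<nu>(a_k) with a_k(x) = P_x(X_k \<in> A, k < \<tau>); as \<tau> < \<infinity> a.s. the
  remainder tends to 0 and the series is R\<star>\<nu>(A). Finiteness and absolute continuity of \<nu>
  follow from S 1_A \<le> P 1_A.\<close>

lemma eSuc_eq_if_minus_1:
  fixes t s :: enat
  assumes "t \<noteq> 0" "t \<noteq> 1" "2 \<le> t \<longrightarrow> s = t - 1"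
  shows "t = eSuc s"
proof (cases t)
  case (enat m)
  with assms(1,2) have "2 \<le> m"
    by (auto simp: zero_enat_def one_enat_def)
  with enat assms(3) have "s = enat (m - 1)"
    by (simp add: numeral_eq_enat one_enat_def)
  with enat \<open>2 \<le> m\<close> show ?thesis
    by (simp add: eSuc_enat)
next
  case infinity
  with assms(3) show ?thesis
    by simp
qed

lemma measure_of_eq_if_emeasure_eq:
  fixes M :: "'a::topological_space measure"
  assumes sets_M: "sets M = sets borel" and F: "\<And>A. A \<in> sets borel \<Longrightarrow> F A = emeasure M A"
  shows "measure_of UNIV (sets borel) F = M" and "measure_space UNIV (sets borel) F"
proof -
  have space_M: "space M = UNIV"
    using sets_eq_imp_space_eq[OF sets_M] by simp
  have sigma_borel: "sigma_sets UNIV (sets (borel :: 'a measure)) = sets borel"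
    using sets.sigma_sets_eq[of "borel :: 'a measure"] by simp
  have "measure_of UNIV (sets borel) F = measure_of UNIV (sets borel) (emeasure M)"
    by (rule measure_of_eq) (auto simp: sigma_borel F)
  also have "\<dots> = M"
    using measure_of_of_measure[of M] by (simp add: space_M sets_M)
  finally show "measure_of UNIV (sets borel) F = M" .
  have "measure_space UNIV (sigma_sets UNIV (sets borel)) F
      = measure_space UNIV (sigma_sets UNIV (sets borel)) (emeasure M)"
    by (rule measure_space_eq) (auto simp: sigma_borel F)
  then show "measure_space UNIV (sets borel) F"
    using measure_space[of M] by (simp add: sigma_borel space_M sets_M)
qed

lemma AE_finite_if_nn_integral_finite:
  assumes "\<tau> \<in> measurable M (count_space UNIV)" and "(\<integral>\<^sup>+\<omega>. ennreal_of_enat (\<tau> \<omega>) \<partial>M) < \<infinity>"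
  shows "AE \<omega> in M. \<tau> \<omega> \<noteq> \<infinity>"
proof -
  have "(\<lambda>\<omega>. ennreal_of_enat (\<tau> \<omega>)) \<in> borel_measurable M"
    using assms(1) by (rule measurable_compose) simp
  from nn_integral_PInf_AE[OF this] assms(2) have "AE \<omega> in M. ennreal_of_enat (\<tau> \<omega>) \<noteq> \<infinity>"
    by simp
  then show ?thesis
    by eventually_elim (metis ennreal_of_enat_infty)
qed

lemma space_path_space [simp]: "space (path_space :: (nat \<Rightarrow> 'a::topological_space) measure) = UNIV"
  by (simp add: space_PiM)

lemma sets_path_space_coordinate:
  "A \<in> sets borel \<Longrightarrow> {\<omega>. \<omega> i \<in> A} \<in> sets (path_space :: (nat \<Rightarrow> 'a::topological_space) measure)"
  using measurable_sets[OF measurable_component_singleton[of i UNIV "\<lambda>_. borel"], of A]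
  by (simp add: vimage_def)

lemma measurable_shift_path_space [measurable]:
  "shift \<in> measurable (path_space :: (nat \<Rightarrow> 'a::topological_space) measure) path_space"
  unfolding shift_def[abs_def] by (rule measurable_PiM_single') auto

lemma shift_apply: "shift \<omega> n = \<omega> (Suc n)"
  by (simp add: shift_def)

definition cylinder :: "(nat \<Rightarrow> 'a set) \<Rightarrow> nat \<Rightarrow> (nat \<Rightarrow> 'a) set" where
  "cylinder A n = {\<omega>. \<forall>i\<le>n. \<omega> i \<in> A i}"

definition cylinders :: "(nat \<Rightarrow> 'a::topological_space) set set" where
  "cylinders = {cylinder A n | A n. \<forall>i. A i \<in> sets borel}"

lemma cylinder_in_sets:
  assumes "\<And>i. A i \<in> sets borel"
  shows "cylinder A n \<in> sets (path_space :: (nat \<Rightarrow> 'a::topological_space) measure)"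
proof -
  have "cylinder A n = (\<Inter>i\<in>{..n}. {\<omega>. \<omega> i \<in> A i}) \<inter> space path_space"
    by (auto simp: cylinder_def)
  then show ?thesis
    using assms by (auto intro!: sets.finite_INT sets_path_space_coordinate)
qed

lemma Int_stable_cylinders: "Int_stable (cylinders :: (nat \<Rightarrow> 'a::topological_space) set set)"
proof (rule Int_stableI)
  fix a b :: "(nat \<Rightarrow> 'a) set"
  assume "a \<in> cylinders" "b \<in> cylinders"
  then obtain A n B m where a: "a = cylinder A n" "\<forall>i. A i \<in> sets borel"
    and b: "b = cylinder B m" "\<forall>i. B i \<in> sets borel"
    unfolding cylinders_def by blast
  define C where "C i = (if i \<le> n then A i else UNIV) \<inter> (if i \<le> m then B i else UNIV)" for i
  have "a \<inter> b = cylinder C (max n m)"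
    unfolding a b C_def cylinder_def by (auto 0 3 dest: spec[of _ "max n m"])
  moreover have "\<forall>i. C i \<in> sets borel"
    using a(2) b(2) by (simp add: C_def)
  ultimately show "a \<inter> b \<in> cylinders"
    unfolding cylinders_def by blast
qed

lemma sets_path_space_cylinders:
  "sets (path_space :: (nat \<Rightarrow> 'a::topological_space) measure) = sigma_sets UNIV cylinders"
proof
  have "UNIV \<in> sets (path_space :: (nat \<Rightarrow> 'a) measure)"
    using sets.top[of "path_space :: (nat \<Rightarrow> 'a) measure"] by simp
  then show "sigma_sets UNIV cylinders \<subseteq> sets (path_space :: (nat \<Rightarrow> 'a) measure)"
    by (intro sets.sigma_sets_subset'[of _ "path_space :: (nat \<Rightarrow> 'a) measure", simplified])
      (auto simp: cylinders_def intro: cylinder_in_sets)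
  have coordinate: "{\<omega>. \<omega> i \<in> A} \<in> (cylinders :: (nat \<Rightarrow> 'a) set set)" if "A \<in> sets borel" for i A
  proof -
    have "{\<omega>. \<omega> i \<in> A} = cylinder (\<lambda>j. if j = i then A else UNIV) i"
      by (auto simp: cylinder_def)
    then show ?thesis
      using that unfolding cylinders_def by force
  qed
  have UNIV_PiE: "(\<Pi>\<^sub>E i\<in>(UNIV::nat set). space (borel::'a measure)) = UNIV"
    by auto
  show "sets (path_space :: (nat \<Rightarrow> 'a) measure) \<subseteq> sigma_sets UNIV cylinders"
    unfolding sets_PiM_single UNIV_PiE using coordinate by (intro sigma_sets_mono') auto
qed

lemma shift_vimage_cylinder: "shift -` cylinder A n = cylinder (case_nat UNIV A) (Suc n)"
proof (intro set_eqI iffI)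
  fix \<omega> assume "\<omega> \<in> cylinder (case_nat UNIV A) (Suc n)"
  then have "\<omega> (Suc i) \<in> A i" if "i \<le> n" for i
    using that by (force simp: cylinder_def)
  then show "\<omega> \<in> shift -` cylinder A n"
    by (simp add: cylinder_def shift_def)
qed (auto simp: cylinder_def shift_def split: nat.split)

lemma stopping_time_nat_level_set:
  assumes "stopping_time_nat \<tau>"
  obtains B where "B \<in> sets (PiM {..n} (\<lambda>_. (borel :: 'a::topological_space measure)))"
    and "{\<omega>. \<tau> \<omega> = enat n} = (\<lambda>\<omega>. restrict \<omega> {..n}) -` B"
proof -
  have "(\<lambda>\<omega>::nat \<Rightarrow> 'a. restrict \<omega> {..n}) \<in> UNIV \<rightarrow> space (PiM {..n} (\<lambda>_. borel))"
    by (simp add: space_PiM)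
  moreover have "{\<omega>. \<tau> \<omega> = enat n} \<in>
      sets (vimage_algebra UNIV (\<lambda>\<omega>. restrict \<omega> {..n}) (PiM {..n} (\<lambda>_. (borel :: 'a measure))))"
    using assms unfolding stopping_time_nat_def by blast
  ultimately show ?thesis
    using that by (subst (asm) sets_vimage_algebra2) blast+
qed

lemma stopping_time_nat_eq_cong:
  assumes "stopping_time_nat \<tau>" and "\<And>i. i \<le> n \<Longrightarrow> \<omega> i = \<omega>' i"
  shows "\<tau> \<omega> = enat n \<longleftrightarrow> \<tau> \<omega>' = enat n"
proof -
  obtain B :: "(nat \<Rightarrow> 'a) set" where B: "{\<omega>. \<tau> \<omega> = enat n} = (\<lambda>\<omega>. restrict \<omega> {..n}) -` B"
    using stopping_time_nat_level_set[OF assms(1)] by metis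
  have "restrict \<omega> {..n} = restrict \<omega>' {..n}"
    using assms(2) by (auto simp: restrict_def)
  then show ?thesis
    using B by (simp add: set_eq_iff)
qed

lemma measurable_stopping_time_nat:
  assumes "stopping_time_nat \<tau>"
  shows "\<tau> \<in> measurable (path_space :: (nat \<Rightarrow> 'a::topological_space) measure) (count_space UNIV)"
proof -
  have level: "{\<omega>. \<tau> \<omega> = enat n} \<in> sets (path_space :: (nat \<Rightarrow> 'a) measure)" for n
  proof -
    obtain B where "B \<in> sets (PiM {..n} (\<lambda>_. (borel :: 'a measure)))"
      and "{\<omega>. \<tau> \<omega> = enat n} = (\<lambda>\<omega>. restrict \<omega> {..n}) -` B"
      using stopping_time_nat_level_set[OF assms] by metis
    then show ?thesis
      using measurable_sets[OF measurable_restrict_subset[of "{..n}" UNIV "\<lambda>_. borel"]] by simp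
  qed
  have "{\<omega>. \<tau> \<omega> = \<infinity>} = UNIV - (\<Union>n. {\<omega>. \<tau> \<omega> = enat n})"
    by (auto simp: not_infinity_eq)
  then have "{\<omega>. \<tau> \<omega> = \<infinity>} \<in> sets (path_space :: (nat \<Rightarrow> 'a) measure)"
    using level sets.top[of "path_space :: (nat \<Rightarrow> 'a) measure"] by auto
  with level show ?thesis
    unfolding measurable_count_space_eq2_countable
    by (auto simp: vimage_def split: enat.split)
      (metis (mono_tags) enat.exhaust)
qed

section \<open>Markov chains given by their finite-dimensional distributions\<close>

lemma fdd_0 [simp]: "fdd K A 0 = indicator (A 0)"
  by (rule ext) simp

locale markov_chain_laws =
  fixes K :: "'a::polish_space \<Rightarrow> 'a measure" and Px :: "'a \<Rightarrow> (nat \<Rightarrow> 'a) measure"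
  assumes markov_laws: "markov_laws K Px"
begin

lemma prob_space_Px: "prob_space (Px x)"
  and sets_Px [measurable_cong]: "sets (Px x) = sets path_space"
  using markov_laws unfolding markov_laws_def by auto

lemma space_Px [simp]: "space (Px x) = UNIV"
  using sets_eq_imp_space_eq[OF sets_Px] by simp

lemma prob_space_K: "prob_space (K x)"
  and sets_K [measurable_cong]: "sets (K x) = sets borel"
  using markov_laws unfolding markov_laws_def markov_kernel_def by auto

lemma space_K: "space (K x) = UNIV"
  using sets_eq_imp_space_eq[OF sets_K] by simp

lemma measurable_K: "K \<in> measurable borel (subprob_algebra borel)"
proof (rule measurable_subprob_algebra)
  show "(\<lambda>x. emeasure (K x) A) \<in> borel_measurable borel" if "A \<in> sets borel" for A
    using markov_laws that unfolding markov_laws_def markov_kernel_def by auto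
qed (auto simp: prob_space_K prob_space_imp_subprob_space sets_K)

lemma nn_integral_Px_le_1:
  assumes "\<And>\<omega>. F \<omega> \<le> 1"
  shows "integral\<^sup>N (Px x) F \<le> 1"
proof -
  have "integral\<^sup>N (Px x) F \<le> (\<integral>\<^sup>+\<omega>. 1 \<partial>Px x)"
    using assms by (intro nn_integral_mono) auto
  then show ?thesis
    using prob_space.emeasure_space_1[OF prob_space_Px] by simp
qed

lemma emeasure_Px_cylinder: "(\<And>i. A i \<in> sets borel) \<Longrightarrow> emeasure (Px x) (cylinder A n) = fdd K A n x"
  using markov_laws unfolding markov_laws_def cylinder_def by simp

lemma measurable_fdd: "(\<And>i. A i \<in> sets borel) \<Longrightarrow> fdd K A n \<in> borel_measurable borel"
proof (induction n arbitrary: A)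
  case (Suc n)
  have [measurable]: "A 0 \<in> sets borel" "fdd K (\<lambda>i. A (Suc i)) n \<in> borel_measurable borel"
    using Suc by auto
  have "(\<lambda>x. \<integral>\<^sup>+ y. fdd K (\<lambda>i. A (Suc i)) n y \<partial>K x) \<in> borel_measurable borel"
    by (rule nn_integral_measurable_subprob_algebra2[OF _ measurable_K]) measurable
  then show ?case
    by simp
qed simp

lemma measurable_Px [measurable]: "Px \<in> measurable borel (subprob_algebra path_space)"
proof (rule measurable_subprob_algebra_generated[OF sets_path_space_cylinders Int_stable_cylinders])
  fix C assume "C \<in> (cylinders :: (nat \<Rightarrow> 'a) set set)"
  then obtain A n where "C = cylinder A n" and "\<forall>i. A i \<in> sets borel"
    unfolding cylinders_def by blast
  then show "(\<lambda>x. emeasure (Px x) C) \<in> borel_measurable borel"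
    by (simp add: emeasure_Px_cylinder measurable_fdd)
next
  show "(\<lambda>x. emeasure (Px x) UNIV) \<in> borel_measurable borel"
    using prob_space.emeasure_space_1[OF prob_space_Px] by simp
qed (auto simp: prob_space_Px prob_space_imp_subprob_space sets_Px)

lemma measurable_nn_integral_Px:
  "F \<in> borel_measurable path_space \<Longrightarrow> (\<lambda>x. \<integral>\<^sup>+\<omega>. F \<omega> \<partial>Px x) \<in> borel_measurable borel"
  by (rule measurable_compose[OF measurable_Px nn_integral_measurable_subprob_algebra])

lemma distr_Px_step: "distr (Px x) borel (\<lambda>\<omega>. \<omega> 1) = K x"
proof (rule measure_eqI)
  fix B assume "B \<in> sets (distr (Px x) borel (\<lambda>\<omega>. \<omega> 1))"
  then have B: "B \<in> sets borel"
    by simp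
  let ?A = "\<lambda>i::nat. if i = 1 then B else UNIV"
  have "emeasure (distr (Px x) borel (\<lambda>\<omega>. \<omega> 1)) B = emeasure (Px x) (cylinder ?A 1)"
    using B by (simp add: emeasure_distr vimage_def cylinder_def le_Suc_eq)
  also have "\<dots> = fdd K ?A 1 x"
    using B by (intro emeasure_Px_cylinder) auto
  also have "\<dots> = emeasure (K x) B"
    using B by (simp add: sets_K)
  finally show "emeasure (distr (Px x) borel (\<lambda>\<omega>. \<omega> 1)) B = emeasure (K x) B" .
qed (simp add: sets_K)

lemma AE_Px_start: "AE \<omega> in Px x. \<omega> 0 = x"
proof -
  have "cylinder (\<lambda>_. {x}) 0 = {\<omega>. \<omega> 0 = x}"
    by (auto simp: cylinder_def)
  then have "emeasure (Px x) {\<omega> \<in> space (Px x). \<omega> 0 = x} = 1"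
    using emeasure_Px_cylinder[of "\<lambda>_. {x}" x 0] by simp
  then show ?thesis
    using prob_space.AE_in_set_eq_1[OF prob_space_Px, of "{\<omega> \<in> space (Px x). \<omega> 0 = x}"]
      sets_Px sets_path_space_coordinate[of "{x}" 0]
    by (simp add: measure_def)
qed

lemma distr_Px_shift: "distr (Px x) path_space shift = K x \<bind> Px"
proof (rule measure_eqI_generator_eq[OF Int_stable_cylinders, of UNIV _ _ "\<lambda>_. UNIV"])
  have Px_K: "Px \<in> measurable (K x) (subprob_algebra path_space)"
    using measurable_Px by (simp add: measurable_cong_sets[OF sets_K refl])
  have shift: "shift \<in> measurable (Px x) path_space"
    using measurable_shift_path_space by (simp add: measurable_cong_sets[OF sets_Px refl])
  show "cylinders \<subseteq> Pow UNIV" "(\<Union>i::nat. UNIV) = UNIV"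
    by auto
  show "sets (distr (Px x) path_space shift) = sigma_sets UNIV cylinders"
    by (simp add: sets_path_space_cylinders)
  show "sets (K x \<bind> Px) = sigma_sets UNIV cylinders"
    by (subst sets_bind[where N=path_space]) (auto simp: sets_Px space_K sets_path_space_cylinders)
  have "UNIV = cylinder (\<lambda>_. UNIV :: 'a set) 0"
    by (auto simp: cylinder_def)
  moreover have "\<forall>i::nat. (UNIV :: 'a set) \<in> sets borel"
    by simp
  ultimately show "range (\<lambda>_. UNIV) \<subseteq> (cylinders :: (nat \<Rightarrow> 'a) set set)"
    unfolding cylinders_def by blast
  have "emeasure (distr (Px x) path_space shift) UNIV = emeasure (Px x) UNIV"
    using shift sets.top[of "path_space :: (nat \<Rightarrow> 'a) measure"] by (simp add: emeasure_distr)
  then show "emeasure (distr (Px x) path_space shift) UNIV \<noteq> \<infinity>"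
    using prob_space.emeasure_space_1[OF prob_space_Px, of x] by simp
  fix C assume "C \<in> (cylinders :: (nat \<Rightarrow> 'a) set set)"
  then obtain A n where C: "C = cylinder A n" and A: "\<forall>i. A i \<in> sets borel"
    unfolding cylinders_def by blast
  have A': "case_nat UNIV A i \<in> sets borel" for i
    using A by (simp split: nat.split)
  have "emeasure (distr (Px x) path_space shift) C = emeasure (Px x) (shift -` cylinder A n)"
    using shift A C by (simp add: emeasure_distr cylinder_in_sets)
  also have "\<dots> = fdd K (case_nat UNIV A) (Suc n) x"
    unfolding shift_vimage_cylinder by (rule emeasure_Px_cylinder) (simp add: A')
  also have "\<dots> = (\<integral>\<^sup>+ y. fdd K A n y \<partial>K x)"
    by simp
  also have "\<dots> = (\<integral>\<^sup>+ y. emeasure (Px y) C \<partial>K x)"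
    unfolding C using A by (intro nn_integral_cong) (simp add: emeasure_Px_cylinder)
  also have "\<dots> = emeasure (K x \<bind> Px) C"
    using A C by (subst emeasure_bind[OF _ Px_K]) (auto simp: space_K intro: cylinder_in_sets)
  finally show "emeasure (distr (Px x) path_space shift) C = emeasure (K x \<bind> Px) C" .
qed

lemma nn_integral_Px_shift:
  assumes [measurable]: "h \<in> borel_measurable borel" "G \<in> borel_measurable path_space"
  shows "(\<integral>\<^sup>+\<omega>. h (\<omega> 1) * G (shift \<omega>) \<partial>Px x)
    = (\<integral>\<^sup>+\<omega>. h (\<omega> 1) * (\<integral>\<^sup>+\<omega>'. G \<omega>' \<partial>Px (\<omega> 1)) \<partial>Px x)"
proof -
  have Px_K: "Px \<in> measurable (K x) (subprob_algebra path_space)"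
    using measurable_Px by (simp add: measurable_cong_sets[OF sets_K refl])
  have hG: "(\<lambda>\<omega>'. h (\<omega>' 0) * G \<omega>') \<in> borel_measurable path_space"
    by measurable
  have [measurable]: "(\<lambda>y. \<integral>\<^sup>+\<omega>'. G \<omega>' \<partial>Px y) \<in> borel_measurable borel"
    by (rule measurable_nn_integral_Px) simp
  have start: "(\<integral>\<^sup>+\<omega>'. h (\<omega>' 0) * G \<omega>' \<partial>Px y) = h y * (\<integral>\<^sup>+\<omega>'. G \<omega>' \<partial>Px y)" for y
  proof -
    have "(\<integral>\<^sup>+\<omega>'. h (\<omega>' 0) * G \<omega>' \<partial>Px y) = (\<integral>\<^sup>+\<omega>'. h y * G \<omega>' \<partial>Px y)"
      using AE_Px_start[of y] by (intro nn_integral_cong_AE) auto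
    then show ?thesis
      by (simp add: nn_integral_cmult measurable_cong_sets[OF sets_Px refl])
  qed
  have "(\<integral>\<^sup>+\<omega>. h (\<omega> 1) * G (shift \<omega>) \<partial>Px x)
      = (\<integral>\<^sup>+\<omega>'. h (\<omega>' 0) * G \<omega>' \<partial>distr (Px x) path_space shift)"
    using hG measurable_shift_path_space
    by (subst nn_integral_distr) (auto simp: shift_def measurable_cong_sets[OF sets_Px refl])
  also have "\<dots> = (\<integral>\<^sup>+y. h y * (\<integral>\<^sup>+\<omega>'. G \<omega>' \<partial>Px y) \<partial>K x)"
    unfolding distr_Px_shift nn_integral_bind[OF hG Px_K] start ..
  also have "\<dots> = (\<integral>\<^sup>+\<omega>. h (\<omega> 1) * (\<integral>\<^sup>+\<omega>'. G \<omega>' \<partial>Px (\<omega> 1)) \<partial>Px x)"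
    unfolding distr_Px_step[symmetric, of x]
    by (subst nn_integral_distr) (auto simp: measurable_cong_sets[OF sets_Px refl])
  finally show ?thesis .
qed

lemma Pop_eq_nn_integral_K: "f \<in> borel_measurable borel \<Longrightarrow> Pop Px f x = integral\<^sup>N (K x) f"
  unfolding Pop_def distr_Px_step[symmetric, of x]
  by (subst nn_integral_distr) (auto simp: measurable_cong_sets[OF sets_Px refl])

lemma measurable_Pop [measurable]: "f \<in> borel_measurable borel \<Longrightarrow> Pop Px f \<in> borel_measurable borel"
  unfolding Pop_def[abs_def] by (rule measurable_nn_integral_Px) simp

lemma Pop_nn_integral_Px:
  "F \<in> borel_measurable path_space \<Longrightarrow>
    Pop Px (\<lambda>y. \<integral>\<^sup>+\<omega>. F \<omega> \<partial>Px y) x = (\<integral>\<^sup>+\<omega>. F (shift \<omega>) \<partial>Px x)"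
  using nn_integral_Px_shift[of "\<lambda>_. 1" F x] unfolding Pop_def by simp

end

locale invariant_markov_chain = markov_chain_laws K Px
  for K :: "'a::polish_space \<Rightarrow> 'a measure" and Px +
  fixes \<mu> :: "'a measure"
  assumes sets_mu [measurable_cong]: "sets \<mu> = sets borel"
    and finite_mu: "finite_measure \<mu>"
    and invariant_mu: "invariant (Pop Px) \<mu>"
begin

lemma space_mu [simp]: "space \<mu> = UNIV"
  using sets_eq_imp_space_eq[OF sets_mu] by simp

lemma bind_mu_K: "\<mu> \<bind> K = \<mu>"
proof (rule measure_eqI)
  have K_mu: "K \<in> measurable \<mu> (subprob_algebra borel)"
    using measurable_K by (simp add: measurable_cong_sets[OF sets_mu refl])
  show sets_bind_K: "sets (\<mu> \<bind> K) = sets \<mu>"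
    by (subst sets_bind[where N=borel]) (auto simp: sets_K sets_mu)
  fix A assume "A \<in> sets (\<mu> \<bind> K)"
  then have A: "A \<in> sets borel"
    using sets_bind_K sets_mu by simp
  have "emeasure (\<mu> \<bind> K) A = (\<integral>\<^sup>+x. emeasure (K x) A \<partial>\<mu>)"
    using A by (subst emeasure_bind[OF _ K_mu]) auto
  also have "\<dots> = (\<integral>\<^sup>+x. Pop Px (indicator A) x \<partial>\<mu>)"
    using A by (intro nn_integral_cong) (simp add: Pop_eq_nn_integral_K sets_K)
  also have "\<dots> = emeasure \<mu> A"
    using invariant_mu A unfolding invariant_def by blast
  finally show "emeasure (\<mu> \<bind> K) A = emeasure \<mu> A" .
qed

lemma nn_integral_Pop:
  assumes f: "f \<in> borel_measurable borel"
  shows "(\<integral>\<^sup>+x. Pop Px f x \<partial>\<mu>) = integral\<^sup>N \<mu> f"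
proof -
  have K_mu: "K \<in> measurable \<mu> (subprob_algebra borel)"
    using measurable_K by (simp add: measurable_cong_sets[OF sets_mu refl])
  have "(\<integral>\<^sup>+x. Pop Px f x \<partial>\<mu>) = (\<integral>\<^sup>+x. integral\<^sup>N (K x) f \<partial>\<mu>)"
    using f by (simp add: Pop_eq_nn_integral_K)
  also have "\<dots> = integral\<^sup>N (\<mu> \<bind> K) f"
    by (rule nn_integral_bind[OF f K_mu, symmetric])
  finally show ?thesis
    by (simp add: bind_mu_K)
qed

lemma nn_integral_mu_finite:
  assumes "\<And>x. f x \<le> 1"
  shows "integral\<^sup>N \<mu> f < \<infinity>"
proof -
  have "integral\<^sup>N \<mu> f \<le> emeasure \<mu> UNIV"
    using assms nn_integral_mono[of \<mu> f "\<lambda>_. 1"] by simp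
  also have "\<dots> < \<infinity>"
    using finite_measure.emeasure_finite[OF finite_mu, of UNIV] by (simp add: top.not_eq_extremum)
  finally show ?thesis .
qed

end

section \<open>Stopped Markov chains\<close>

locale stopped_markov_chain = markov_chain_laws K Px
  for K :: "'a::polish_space \<Rightarrow> 'a measure" and Px +
  fixes \<tau> :: "(nat \<Rightarrow> 'a) \<Rightarrow> enat"
  assumes stopping_time: "stopping_time_nat \<tau>"
    and theta_compatible: "theta_compatible Px \<tau>"
begin

lemma measurable_tau [measurable]: "\<tau> \<in> measurable path_space (count_space UNIV)"
  by (rule measurable_stopping_time_nat[OF stopping_time])

lemma sets_tau_pred: "{\<omega>. P (\<tau> \<omega>)} \<in> sets path_space"
  using measurable_sets[OF measurable_tau, of "{a. P a}"] by (simp add: vimage_def)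

lemma measurable_indicator_tau [measurable]:
  "indicator {\<omega>. \<tau> \<omega> = 1} \<in> borel_measurable path_space"
  "indicator {\<omega>. \<tau> \<omega> \<noteq> 1} \<in> borel_measurable path_space"
  "indicator {\<omega>. \<tau> \<omega> < \<infinity>} \<in> borel_measurable path_space"
  "indicator {\<omega>. enat n < \<tau> \<omega>} \<in> borel_measurable path_space"
  by (rule borel_measurable_indicator[OF sets_tau_pred])+

lemma AE_tau_eq_eSuc_shift: "AE \<omega> in Px x. \<tau> \<omega> \<noteq> 1 \<longrightarrow> \<tau> \<omega> = eSuc (\<tau> (shift \<omega>))"
proof -
  have "{\<omega> \<in> space (Px x). \<tau> \<omega> = 0} \<in> sets (Px x)"
    using sets_tau_pred[of "\<lambda>t. t = 0"] by (simp add: sets_Px)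
  then have "{\<omega> \<in> space (Px x). \<tau> \<omega> = 0} \<in> null_sets (Px x)"
    using theta_compatible unfolding theta_compatible_def by blast
  then have "AE \<omega> in Px x. \<tau> \<omega> \<noteq> 0"
    by (rule AE_I') auto
  moreover have "AE \<omega> in Px x. 2 \<le> \<tau> \<omega> \<longrightarrow> \<tau> (shift \<omega>) = \<tau> \<omega> - 1"
    using theta_compatible unfolding theta_compatible_def by blast
  ultimately show ?thesis
    by eventually_elim (auto intro: eSuc_eq_if_minus_1)
qed

definition stop_at_one :: "'a \<Rightarrow> 'a set" where
  "stop_at_one x = {y. \<tau> (\<lambda>k. if k = 0 then x else y) = 1}"

lemma sets_stop_at_one [measurable]: "stop_at_one x \<in> sets borel"
proof -
  have "(\<lambda>y. \<lambda>k::nat. if k = 0 then x else y) \<in> measurable borel (path_space :: (nat \<Rightarrow> 'a) measure)"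
    by (rule measurable_PiM_single') auto
  from measurable_sets[OF this sets_tau_pred[of "\<lambda>t. t = 1"]] show ?thesis
    by (simp add: stop_at_one_def vimage_def)
qed

text \<open>{\<tau> = 1} depends only on (\<omega> 0, \<omega> 1), and \<omega> 0 = x almost surely.\<close>

lemma AE_tau_eq_1_iff: "AE \<omega> in Px x. \<tau> \<omega> = 1 \<longleftrightarrow> \<omega> 1 \<in> stop_at_one x"
  using AE_Px_start[of x]
proof eventually_elim
  case (elim \<omega>)
  have "\<tau> \<omega> = enat 1 \<longleftrightarrow> \<tau> (\<lambda>k. if k = 0 then x else \<omega> 1) = enat 1"
    using elim by (intro stopping_time_nat_eq_cong[OF stopping_time]) (auto simp: le_Suc_eq)
  then show ?case
    unfolding stop_at_one_def one_enat_def by (simp only: mem_Collect_eq)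
qed

lemma measurable_Sop [measurable]:
  assumes [measurable]: "f \<in> borel_measurable borel"
  shows "Sop Px \<tau> f \<in> borel_measurable borel"
  unfolding Sop_def[abs_def] by (rule measurable_nn_integral_Px) measurable

lemma Sop_le_Pop: "Sop Px \<tau> f x \<le> Pop Px f x"
  unfolding Sop_def Pop_def by (intro nn_integral_mono) (auto split: split_indicator)

lemma Sop_nn_integral_Px:
  assumes [measurable]: "F \<in> borel_measurable path_space"
  shows "Sop Px \<tau> (\<lambda>y. \<integral>\<^sup>+\<omega>. F \<omega> \<partial>Px y) x
    = (\<integral>\<^sup>+\<omega>. indicator {\<omega>. \<tau> \<omega> = 1} \<omega> * F (shift \<omega>) \<partial>Px x)"
proof -
  have "Sop Px \<tau> (\<lambda>y. \<integral>\<^sup>+\<omega>. F \<omega> \<partial>Px y) x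
      = (\<integral>\<^sup>+\<omega>. indicator (stop_at_one x) (\<omega> 1) * (\<integral>\<^sup>+\<omega>'. F \<omega>' \<partial>Px (\<omega> 1)) \<partial>Px x)"
    unfolding Sop_def using AE_tau_eq_1_iff[of x]
    by (intro nn_integral_cong_AE) (auto elim!: eventually_mono simp: mult.commute split: split_indicator)
  also have "\<dots> = (\<integral>\<^sup>+\<omega>. indicator (stop_at_one x) (\<omega> 1) * F (shift \<omega>) \<partial>Px x)"
    by (rule nn_integral_Px_shift[symmetric]) auto
  also have "\<dots> = (\<integral>\<^sup>+\<omega>. indicator {\<omega>. \<tau> \<omega> = 1} \<omega> * F (shift \<omega>) \<partial>Px x)"
    using AE_tau_eq_1_iff[of x] by (intro nn_integral_cong_AE) (auto elim!: eventually_mono split: split_indicator)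
  finally show ?thesis .
qed

lemma Pop_eq_Sop_plus:
  assumes [measurable]: "F \<in> borel_measurable path_space"
  shows "Pop Px (\<lambda>y. \<integral>\<^sup>+\<omega>. F \<omega> \<partial>Px y) x
    = Sop Px \<tau> (\<lambda>y. \<integral>\<^sup>+\<omega>. F \<omega> \<partial>Px y) x + (\<integral>\<^sup>+\<omega>. indicator {\<omega>. \<tau> \<omega> \<noteq> 1} \<omega> * F (shift \<omega>) \<partial>Px x)"
proof -
  have "Pop Px (\<lambda>y. \<integral>\<^sup>+\<omega>. F \<omega> \<partial>Px y) x
      = (\<integral>\<^sup>+\<omega>. indicator {\<omega>. \<tau> \<omega> = 1} \<omega> * F (shift \<omega>)
          + indicator {\<omega>. \<tau> \<omega> \<noteq> 1} \<omega> * F (shift \<omega>) \<partial>Px x)"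
    unfolding Pop_nn_integral_Px[OF assms] by (intro nn_integral_cong) (auto split: split_indicator)
  also have "\<dots> = (\<integral>\<^sup>+\<omega>. indicator {\<omega>. \<tau> \<omega> = 1} \<omega> * F (shift \<omega>) \<partial>Px x)
      + (\<integral>\<^sup>+\<omega>. indicator {\<omega>. \<tau> \<omega> \<noteq> 1} \<omega> * F (shift \<omega>) \<partial>Px x)"
    by (rule nn_integral_add) measurable
  finally show ?thesis
    by (simp add: Sop_nn_integral_Px)
qed

definition S_kernel :: "'a \<Rightarrow> 'a measure" where
  "S_kernel x = distr (density (Px x) (indicator {\<omega>. \<tau> \<omega> = 1})) borel (\<lambda>\<omega>. \<omega> 1)"

lemma sets_S_kernel [measurable_cong]: "sets (S_kernel x) = sets borel"
  by (simp add: S_kernel_def)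

lemma space_S_kernel [simp]: "space (S_kernel x) = UNIV"
  using sets_eq_imp_space_eq[OF sets_S_kernel] by simp

lemma nn_integral_S_kernel:
  assumes [measurable]: "f \<in> borel_measurable borel"
  shows "integral\<^sup>N (S_kernel x) f = Sop Px \<tau> f x"
proof -
  have "integral\<^sup>N (S_kernel x) f = integral\<^sup>N (density (Px x) (indicator {\<omega>. \<tau> \<omega> = 1})) (\<lambda>\<omega>. f (\<omega> 1))"
    unfolding S_kernel_def by (subst nn_integral_distr) (auto simp: measurable_cong_sets[OF sets_Px refl])
  also have "\<dots> = Sop Px \<tau> f x"
    unfolding Sop_def
    by (subst nn_integral_density) (auto simp: measurable_cong_sets[OF sets_Px refl] mult.commute)
  finally show ?thesis .
qed

lemma measurable_S_kernel: "S_kernel \<in> measurable borel (subprob_algebra borel)"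
proof (rule measurable_subprob_algebra)
  fix x :: 'a
  have "emeasure (S_kernel x) (space (S_kernel x)) = Sop Px \<tau> (indicator UNIV) x"
    using nn_integral_S_kernel[of "indicator UNIV" x] by simp
  also have "\<dots> \<le> Pop Px (indicator UNIV) x"
    by (rule Sop_le_Pop)
  also have "\<dots> = 1"
    using prob_space.emeasure_space_1[OF prob_space_K] by (simp add: Pop_eq_nn_integral_K space_K)
  finally show "subprob_space (S_kernel x)"
    by (intro subprob_spaceI) auto
next
  fix A :: "'a set" assume [measurable]: "A \<in> sets borel"
  have "(\<lambda>x. emeasure (S_kernel x) A) = Sop Px \<tau> (indicator A)"
    using nn_integral_S_kernel[of "indicator A"] by (simp add: sets_S_kernel fun_eq_iff)
  then show "(\<lambda>x. emeasure (S_kernel x) A) \<in> borel_measurable borel"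
    by simp
qed (rule sets_S_kernel)

definition hit_indicator :: "'a set \<Rightarrow> (nat \<Rightarrow> 'a) \<Rightarrow> ennreal" where
  "hit_indicator A \<omega> = indicator A (\<omega> (the_enat (\<tau> \<omega>))) * indicator {\<omega>. \<tau> \<omega> < \<infinity>} \<omega>"

lemma Qop_indicator: "Qop Px \<tau> (indicator A) = (\<lambda>x. \<integral>\<^sup>+\<omega>. hit_indicator A \<omega> \<partial>Px x)"
  unfolding Qop_def[abs_def] hit_indicator_def ..

lemma measurable_hit_indicator [measurable]:
  assumes [measurable]: "A \<in> sets borel"
  shows "hit_indicator A \<in> borel_measurable path_space"
proof -
  have "(\<lambda>\<omega>. the_enat (\<tau> \<omega>)) \<in> measurable path_space (count_space UNIV)"
    by (rule measurable_compose[OF measurable_tau]) simp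
  then have "(\<lambda>\<omega>::nat \<Rightarrow> 'a. \<omega> (the_enat (\<tau> \<omega>))) \<in> measurable path_space borel"
    by (rule measurable_compose_countable[where f="\<lambda>i \<omega>. \<omega> i", rotated])
      (rule measurable_component_singleton, simp)
  then show ?thesis
    unfolding hit_indicator_def[abs_def] by measurable
qed

lemma hit_indicator_shift:
  assumes "\<tau> \<omega> = eSuc (\<tau> (shift \<omega>))"
  shows "hit_indicator A \<omega> = hit_indicator A (shift \<omega>)"
  using assms by (cases "\<tau> (shift \<omega>)") (auto simp: hit_indicator_def eSuc_enat shift_def)

lemma hit_indicator_first_step:
  assumes "\<tau> \<omega> \<noteq> 1 \<longrightarrow> \<tau> \<omega> = eSuc (\<tau> (shift \<omega>))"
  shows "hit_indicator A \<omega>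
    = indicator A (\<omega> 1) * indicator {\<omega>. \<tau> \<omega> = 1} \<omega> + indicator {\<omega>. \<tau> \<omega> \<noteq> 1} \<omega> * hit_indicator A (shift \<omega>)"
proof (cases "\<tau> \<omega> = 1")
  case True
  then show ?thesis
    by (simp add: hit_indicator_def one_enat_def)
next
  case False
  with assms show ?thesis
    by (simp add: hit_indicator_shift)
qed

lemma Qop_eq_Sop_plus:
  assumes [measurable]: "A \<in> sets borel"
  shows "Qop Px \<tau> (indicator A) x
    = Sop Px \<tau> (indicator A) x + (\<integral>\<^sup>+\<omega>. indicator {\<omega>. \<tau> \<omega> \<noteq> 1} \<omega> * hit_indicator A (shift \<omega>) \<partial>Px x)"
proof -
  have "AE \<omega> in Px x. hit_indicator A \<omega>
      = indicator A (\<omega> 1) * indicator {\<omega>. \<tau> \<omega> = 1} \<omega> + indicator {\<omega>. \<tau> \<omega> \<noteq> 1} \<omega> * hit_indicator A (shift \<omega>)"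
    using AE_tau_eq_eSuc_shift[of x] by eventually_elim (rule hit_indicator_first_step)
  then have "Qop Px \<tau> (indicator A) x = (\<integral>\<^sup>+\<omega>. indicator A (\<omega> 1) * indicator {\<omega>. \<tau> \<omega> = 1} \<omega>
      + indicator {\<omega>. \<tau> \<omega> \<noteq> 1} \<omega> * hit_indicator A (shift \<omega>) \<partial>Px x)"
    unfolding Qop_indicator by (rule nn_integral_cong_AE)
  also have "\<dots> = Sop Px \<tau> (indicator A) x
      + (\<integral>\<^sup>+\<omega>. indicator {\<omega>. \<tau> \<omega> \<noteq> 1} \<omega> * hit_indicator A (shift \<omega>) \<partial>Px x)"
    unfolding Sop_def by (rule nn_integral_add) measurable
  finally show ?thesis .
qed

definition visit_indicator :: "'a set \<Rightarrow> nat \<Rightarrow> (nat \<Rightarrow> 'a) \<Rightarrow> ennreal" where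
  "visit_indicator A n \<omega> = indicator A (\<omega> n) * indicator {\<omega>. enat n < \<tau> \<omega>} \<omega>"

definition visit_prob :: "'a set \<Rightarrow> nat \<Rightarrow> 'a \<Rightarrow> ennreal" where
  "visit_prob A n x = (\<integral>\<^sup>+\<omega>. visit_indicator A n \<omega> \<partial>Px x)"

lemma measurable_visit_indicator [measurable]:
  assumes [measurable]: "A \<in> sets borel"
  shows "visit_indicator A n \<in> borel_measurable path_space"
  unfolding visit_indicator_def[abs_def] by measurable

lemma measurable_visit_prob [measurable]:
  "A \<in> sets borel \<Longrightarrow> visit_prob A n \<in> borel_measurable borel"
  unfolding visit_prob_def[abs_def] by (rule measurable_nn_integral_Px) simp

lemma visit_prob_le_1: "visit_prob A n x \<le> 1"
  unfolding visit_prob_def visit_indicator_def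
  by (rule nn_integral_Px_le_1) (simp split: split_indicator)

lemma visit_prob_le_tail: "visit_prob A n x \<le> emeasure (Px x) {\<omega>. enat n < \<tau> \<omega>}"
proof -
  have "visit_prob A n x \<le> (\<integral>\<^sup>+\<omega>. indicator {\<omega>. enat n < \<tau> \<omega>} \<omega> \<partial>Px x)"
    unfolding visit_prob_def visit_indicator_def
    by (intro nn_integral_mono) (simp split: split_indicator)
  then show ?thesis
    using sets_tau_pred by (simp add: sets_Px)
qed

lemma visit_prob_0: "visit_prob A 0 x = indicator A x"
proof -
  have "AE \<omega> in Px x. visit_indicator A 0 \<omega> = indicator A x"
    using AE_Px_start[of x] AE_tau_eq_eSuc_shift[of x]
    by eventually_elim (auto simp: visit_indicator_def enat_0 split: split_indicator)
  then have "visit_prob A 0 x = (\<integral>\<^sup>+\<omega>. indicator A x \<partial>Px x)"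
    unfolding visit_prob_def by (rule nn_integral_cong_AE)
  then show ?thesis
    using prob_space.emeasure_space_1[OF prob_space_Px, of x] by simp
qed

lemma visit_indicator_first_step:
  assumes "\<tau> \<omega> \<noteq> 1 \<longrightarrow> \<tau> \<omega> = eSuc (\<tau> (shift \<omega>))"
  shows "indicator {\<omega>. \<tau> \<omega> \<noteq> 1} \<omega> * visit_indicator A n (shift \<omega>) = visit_indicator A (Suc n) \<omega>"
proof (cases "\<tau> \<omega> = 1")
  case True
  then show ?thesis
    by (simp add: visit_indicator_def one_enat_def)
next
  case False
  with assms have "\<tau> \<omega> = eSuc (\<tau> (shift \<omega>))"
    by simp
  then show ?thesis
    using False by (simp add: visit_indicator_def shift_apply split: split_indicator flip: eSuc_enat)
qed

lemma Pop_visit_prob: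
  assumes [measurable]: "A \<in> sets borel"
  shows "Pop Px (visit_prob A n) x = Sop Px \<tau> (visit_prob A n) x + visit_prob A (Suc n) x"
proof -
  have "AE \<omega> in Px x.
      indicator {\<omega>. \<tau> \<omega> \<noteq> 1} \<omega> * visit_indicator A n (shift \<omega>) = visit_indicator A (Suc n) \<omega>"
    using AE_tau_eq_eSuc_shift[of x] by eventually_elim (rule visit_indicator_first_step)
  then have "(\<integral>\<^sup>+\<omega>. indicator {\<omega>. \<tau> \<omega> \<noteq> 1} \<omega> * visit_indicator A n (shift \<omega>) \<partial>Px x)
      = visit_prob A (Suc n) x"
    unfolding visit_prob_def by (rule nn_integral_cong_AE)
  moreover have "visit_prob A n = (\<lambda>y. \<integral>\<^sup>+\<omega>. visit_indicator A n \<omega> \<partial>Px y)"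
    by (simp add: visit_prob_def fun_eq_iff)
  ultimately show ?thesis
    using Pop_eq_Sop_plus[of "visit_indicator A n" x] by simp
qed

end

section \<open>The measure S\<star>\<mu>\<close>

locale invariant_stopped_markov_chain =
  stopped_markov_chain K Px \<tau> + invariant_markov_chain K Px \<mu>
  for K :: "'a::polish_space \<Rightarrow> 'a measure" and Px \<tau> \<mu>
begin

definition \<nu> :: "'a measure" where
  "\<nu> = \<mu> \<bind> S_kernel"

lemma sets_\<nu> [measurable_cong]: "sets \<nu> = sets borel"
  unfolding \<nu>_def by (subst sets_bind[where N=borel]) (auto simp: sets_S_kernel)

lemma nn_integral_\<nu>: "f \<in> borel_measurable borel \<Longrightarrow> integral\<^sup>N \<nu> f = (\<integral>\<^sup>+x. Sop Px \<tau> f x \<partial>\<mu>)"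
  using measurable_S_kernel unfolding \<nu>_def
  by (subst nn_integral_bind[where B=borel]) (auto simp: nn_integral_S_kernel measurable_cong_sets[OF sets_mu refl])

lemma emeasure_\<nu>: "A \<in> sets borel \<Longrightarrow> emeasure \<nu> A = star_fun (Sop Px \<tau>) \<mu> A"
  using nn_integral_\<nu>[of "indicator A"] by (simp add: sets_\<nu> star_fun_def)

lemma star_Sop_eq_\<nu>: "star (Sop Px \<tau>) \<mu> = \<nu>"
  and measure_space_star_fun_Sop: "measure_space UNIV (sets borel) (star_fun (Sop Px \<tau>) \<mu>)"
  unfolding star_def using measure_of_eq_if_emeasure_eq[OF sets_\<nu>] emeasure_\<nu> by auto

lemma emeasure_\<nu>_le: "A \<in> sets borel \<Longrightarrow> emeasure \<nu> A \<le> emeasure \<mu> A"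
proof -
  assume A: "A \<in> sets borel"
  have "emeasure \<nu> A \<le> (\<integral>\<^sup>+x. Pop Px (indicator A) x \<partial>\<mu>)"
    unfolding emeasure_\<nu>[OF A] star_fun_def by (intro nn_integral_mono Sop_le_Pop)
  also have "\<dots> = emeasure \<mu> A"
    using invariant_mu A unfolding invariant_def by blast
  finally show ?thesis .
qed

lemma space_\<nu> [simp]: "space \<nu> = UNIV"
  using sets_eq_imp_space_eq[OF sets_\<nu>] by simp

lemma finite_measure_\<nu>: "finite_measure \<nu>"
  using emeasure_\<nu>_le[of UNIV] finite_measure.emeasure_finite[OF finite_mu, of UNIV]
  by (intro finite_measureI) (auto simp: top.not_eq_extremum dest: le_less_trans)

lemma absolutely_continuous_\<nu>: "absolutely_continuous \<mu> \<nu>"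
  unfolding absolutely_continuous_def
  by (auto simp: sets_\<nu> sets_mu null_sets_def) (metis emeasure_\<nu>_le antisym zero_le)

lemma invariant_Qop_\<nu>: "invariant (Qop Px \<tau>) \<nu>"
  unfolding invariant_def
proof
  fix A :: "'a set" assume A [measurable]: "A \<in> sets borel"
  define T where "T x = (\<integral>\<^sup>+\<omega>. indicator {\<omega>. \<tau> \<omega> \<noteq> 1} \<omega> * hit_indicator A (shift \<omega>) \<partial>Px x)" for x
  have [measurable]: "T \<in> borel_measurable borel" "Qop Px \<tau> (indicator A) \<in> borel_measurable borel"
    unfolding T_def[abs_def] Qop_indicator by (auto intro!: measurable_nn_integral_Px)
  have "(\<integral>\<^sup>+x. Sop Px \<tau> (Qop Px \<tau> (indicator A)) x \<partial>\<mu>) + integral\<^sup>N \<mu> T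
      = (\<integral>\<^sup>+x. Pop Px (Qop Px \<tau> (indicator A)) x \<partial>\<mu>)"
    unfolding Qop_indicator Pop_eq_Sop_plus[OF measurable_hit_indicator[OF A]] T_def
    by (rule nn_integral_add[symmetric]) (auto simp: Qop_indicator[symmetric] T_def[symmetric])
  also have "\<dots> = (\<integral>\<^sup>+x. Qop Px \<tau> (indicator A) x \<partial>\<mu>)"
    by (rule nn_integral_Pop) measurable
  also have "\<dots> = (\<integral>\<^sup>+x. Sop Px \<tau> (indicator A) x \<partial>\<mu>) + integral\<^sup>N \<mu> T"
    unfolding Qop_eq_Sop_plus[OF A] T_def[symmetric] by (rule nn_integral_add) measurable
  finally have "(\<integral>\<^sup>+x. Sop Px \<tau> (Qop Px \<tau> (indicator A)) x \<partial>\<mu>) + integral\<^sup>N \<mu> T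
      = (\<integral>\<^sup>+x. Sop Px \<tau> (indicator A) x \<partial>\<mu>) + integral\<^sup>N \<mu> T" .
  moreover have "T x \<le> 1" for x
    unfolding T_def by (rule nn_integral_Px_le_1) (simp add: hit_indicator_def split: split_indicator)
  then have "integral\<^sup>N \<mu> T \<noteq> \<infinity>"
    using nn_integral_mu_finite[of T] by simp
  ultimately have "(\<integral>\<^sup>+x. Sop Px \<tau> (Qop Px \<tau> (indicator A)) x \<partial>\<mu>) = (\<integral>\<^sup>+x. Sop Px \<tau> (indicator A) x \<partial>\<mu>)"
    by (metis add.commute ennreal_add_left_cancel)
  then show "integral\<^sup>N \<nu> (Qop Px \<tau> (indicator A)) = emeasure \<nu> A"
    by (simp add: nn_integral_\<nu> emeasure_\<nu> star_fun_def)
qed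

lemma nn_integral_visit_prob_telescope:
  assumes [measurable]: "A \<in> sets borel"
  shows "integral\<^sup>N \<mu> (visit_prob A n) + (\<Sum>k<n. integral\<^sup>N \<nu> (visit_prob A k)) = emeasure \<mu> A"
proof (induction n)
  case 0
  then show ?case
    by (simp add: visit_prob_0)
next
  case (Suc n)
  have "integral\<^sup>N \<mu> (visit_prob A n) = (\<integral>\<^sup>+x. Pop Px (visit_prob A n) x \<partial>\<mu>)"
    by (rule nn_integral_Pop[symmetric]) measurable
  also have "\<dots> = (\<integral>\<^sup>+x. Sop Px \<tau> (visit_prob A n) x \<partial>\<mu>) + integral\<^sup>N \<mu> (visit_prob A (Suc n))"
    by (simp add: Pop_visit_prob nn_integral_add)
  also have "(\<integral>\<^sup>+x. Sop Px \<tau> (visit_prob A n) x \<partial>\<mu>) = integral\<^sup>N \<nu> (visit_prob A n)"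
    by (rule nn_integral_\<nu>[symmetric]) measurable
  finally show ?case
    using Suc.IH by (simp add: ac_simps)
qed

end

locale finite_stopped_markov_chain = invariant_stopped_markov_chain K Px \<tau> \<mu>
  for K :: "'a::polish_space \<Rightarrow> 'a measure" and Px \<tau> \<mu> +
  assumes AE_tau_finite: "AE \<omega> in Px x. \<tau> \<omega> \<noteq> \<infinity>"
begin

lemma tail_event_Suc_subset: "{\<omega>. enat (Suc n) < \<tau> \<omega>} \<subseteq> {\<omega>. enat n < \<tau> \<omega>}"
  using less_trans[of "enat n" "enat (Suc n)"] by auto

lemma INF_tail_prob: "(INF n. emeasure (Px x) {\<omega>. enat n < \<tau> \<omega>}) = 0"
proof -
  have "decseq (\<lambda>n. {\<omega>. enat n < \<tau> \<omega>})"
    by (intro decseq_SucI tail_event_Suc_subset)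
  moreover have "emeasure (Px x) X \<noteq> \<infinity>" for X
    using prob_space.emeasure_le_1[OF prob_space_Px, of x X] by (auto simp: top_unique)
  ultimately have "(INF n. emeasure (Px x) {\<omega>. enat n < \<tau> \<omega>}) = emeasure (Px x) (\<Inter>n. {\<omega>. enat n < \<tau> \<omega>})"
    by (intro INF_emeasure_decseq) (auto simp: sets_Px sets_tau_pred)
  also have "(\<Inter>n. {\<omega>. enat n < \<tau> \<omega>}) = {\<omega> \<in> space (Px x). \<tau> \<omega> = \<infinity>}"
  proof (intro set_eqI iffI)
    fix \<omega> assume "\<omega> \<in> (\<Inter>n. {\<omega>. enat n < \<tau> \<omega>})"
    then show "\<omega> \<in> {\<omega> \<in> space (Px x). \<tau> \<omega> = \<infinity>}"
      by (cases "\<tau> \<omega>") auto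
  qed auto
  also have "emeasure (Px x) \<dots> = 0"
    using AE_tau_finite[of x] sets_tau_pred[of "\<lambda>t. t = \<infinity>"]
    by (subst AE_iff_measurable[symmetric]) (auto simp: sets_Px)
  finally show ?thesis .
qed

lemma INF_nn_integral_tail_prob: "(INF n. \<integral>\<^sup>+x. emeasure (Px x) {\<omega>. enat n < \<tau> \<omega>} \<partial>\<mu>) = 0"
proof -
  have [measurable]: "(\<lambda>x. emeasure (Px x) {\<omega>. enat n < \<tau> \<omega>}) \<in> borel_measurable borel" for n
    using sets_tau_pred by measurable
  have "(INF n. \<integral>\<^sup>+x. emeasure (Px x) {\<omega>. enat n < \<tau> \<omega>} \<partial>\<mu>)
      = (\<integral>\<^sup>+x. (INF n. emeasure (Px x) {\<omega>. enat n < \<tau> \<omega>}) \<partial>\<mu>)"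
  proof (rule nn_integral_monotone_convergence_INF_decseq[symmetric])
    show "decseq (\<lambda>n x. emeasure (Px x) {\<omega>. enat n < \<tau> \<omega>})"
      by (intro decseq_SucI le_funI emeasure_mono tail_event_Suc_subset) (simp add: sets_Px sets_tau_pred)
    show "(\<integral>\<^sup>+x. emeasure (Px x) {\<omega>. enat n < \<tau> \<omega>} \<partial>\<mu>) < \<infinity>" for n
      by (rule nn_integral_mu_finite) (rule prob_space.emeasure_le_1[OF prob_space_Px])
  qed simp
  then show ?thesis
    by (simp add: INF_tail_prob)
qed

lemma suminf_nn_integral_visit_prob:
  assumes A: "A \<in> sets borel"
  shows "(\<Sum>k. integral\<^sup>N \<nu> (visit_prob A k)) = emeasure \<mu> A"
proof (rule antisym)
  let ?S = "\<Sum>k. integral\<^sup>N \<nu> (visit_prob A k)"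
  show "?S \<le> emeasure \<mu> A"
    using nn_integral_visit_prob_telescope[OF A]
    by (intro suminf_le_const[OF summableI]) (metis le_iff_add add.commute)
  have "emeasure \<mu> A \<le> ?S + (\<integral>\<^sup>+x. emeasure (Px x) {\<omega>. enat n < \<tau> \<omega>} \<partial>\<mu>)" for n
  proof -
    have "emeasure \<mu> A = integral\<^sup>N \<mu> (visit_prob A n) + (\<Sum>k<n. integral\<^sup>N \<nu> (visit_prob A k))"
      using nn_integral_visit_prob_telescope[OF A] by simp
    also have "\<dots> \<le> (\<integral>\<^sup>+x. emeasure (Px x) {\<omega>. enat n < \<tau> \<omega>} \<partial>\<mu>) + ?S"
      by (intro add_mono nn_integral_mono visit_prob_le_tail sum_le_suminf[OF summableI]) auto
    finally show ?thesis
      by (simp add: add.commute)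
  qed
  then have "emeasure \<mu> A \<le> (INF n. ?S + (\<integral>\<^sup>+x. emeasure (Px x) {\<omega>. enat n < \<tau> \<omega>} \<partial>\<mu>))"
    by (rule INF_greatest)
  also have "\<dots> = ?S"
    by (simp add: INF_ennreal_const_add INF_nn_integral_tail_prob)
  finally show "emeasure \<mu> A \<le> ?S" .
qed

lemma Rop_indicator_eq_suminf:
  assumes A: "A \<in> sets borel"
  shows "Rop Px \<tau> (indicator A) x = (\<Sum>k. visit_prob A k x)"
proof -
  have "AE \<omega> in Px x. (\<Sum>k < the_enat (\<tau> \<omega>). indicator A (\<omega> k)) * indicator {\<omega>. \<tau> \<omega> < \<infinity>} \<omega>
      = (\<Sum>k. visit_indicator A k \<omega>)"
    using AE_tau_finite[of x]
  proof eventually_elim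
    case (elim \<omega>)
    then obtain m where m: "\<tau> \<omega> = enat m"
      by auto
    have "(\<Sum>k. visit_indicator A k \<omega>) = (\<Sum>k<m. visit_indicator A k \<omega>)"
      by (rule suminf_finite) (auto simp: visit_indicator_def m)
    also have "\<dots> = (\<Sum>k<m. indicator A (\<omega> k))"
      by (rule sum.cong) (auto simp: visit_indicator_def m)
    finally show ?case
      by (simp add: m)
  qed
  then have "Rop Px \<tau> (indicator A) x = (\<integral>\<^sup>+\<omega>. (\<Sum>k. visit_indicator A k \<omega>) \<partial>Px x)"
    unfolding Rop_def by (rule nn_integral_cong_AE)
  also have "\<dots> = (\<Sum>k. visit_prob A k x)"
    unfolding visit_prob_def using A by (intro nn_integral_suminf) simp
  finally show ?thesis .
qed

lemma star_Rop_\<nu>: "star (Rop Px \<tau>) \<nu> = \<mu>"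
  unfolding star_def
proof (rule measure_of_eq_if_emeasure_eq(1)[OF sets_mu])
  fix A :: "'a set" assume A: "A \<in> sets borel"
  have "star_fun (Rop Px \<tau>) \<nu> A = (\<integral>\<^sup>+x. (\<Sum>k. visit_prob A k x) \<partial>\<nu>)"
    unfolding star_fun_def by (intro nn_integral_cong) (simp add: Rop_indicator_eq_suminf[OF A])
  also have "\<dots> = (\<Sum>k. integral\<^sup>N \<nu> (visit_prob A k))"
    using A by (intro nn_integral_suminf) simp
  finally show "star_fun (Rop Px \<tau>) \<nu> A = emeasure \<mu> A"
    using suminf_nn_integral_visit_prob[OF A] by simp
qed

lemma emeasure_\<nu>_UNIV_neq_0:
  assumes "emeasure \<mu> UNIV \<noteq> 0"
  shows "emeasure \<nu> UNIV \<noteq> 0"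
proof
  assume \<nu>_0: "emeasure \<nu> UNIV = 0"
  have "integral\<^sup>N \<nu> (visit_prob UNIV k) \<le> (\<integral>\<^sup>+x. 1 \<partial>\<nu>)" for k
    by (intro nn_integral_mono visit_prob_le_1)
  then have "integral\<^sup>N \<nu> (visit_prob UNIV k) = 0" for k
    using \<nu>_0 by simp
  then show False
    using suminf_nn_integral_visit_prob[of UNIV] assms by simp
qed

end

theorem mainTheorem8:
  fixes K :: "'a::polish_space \<Rightarrow> 'a measure"
    and Px :: "'a \<Rightarrow> (nat \<Rightarrow> 'a) measure"
    and \<tau> :: "(nat \<Rightarrow> 'a) \<Rightarrow> enat"
    and \<mu> :: "'a measure"
  assumes chain: "markov_laws K Px"
    and stop: "stopping_time_nat \<tau>"
    and compat: "theta_compatible Px \<tau>"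
    and integrable_tau: "\<forall>x. (\<integral>\<^sup>+ \<omega>. ennreal_of_enat (\<tau> \<omega>) \<partial>Px x) < \<infinity>"
    and mu_sets: "sets \<mu> = sets borel"
    and mu_finite: "finite_measure \<mu>"
    and mu_nonzero: "emeasure \<mu> (space \<mu>) \<noteq> 0"
    and mu_inv: "invariant (Pop Px) \<mu>"
  shows "measure_space UNIV (sets borel) (star_fun (Sop Px \<tau>) \<mu>)
    \<and> finite_measure (star (Sop Px \<tau>) \<mu>)
    \<and> emeasure (star (Sop Px \<tau>) \<mu>) UNIV \<noteq> 0
    \<and> invariant (Qop Px \<tau>) (star (Sop Px \<tau>) \<mu>)
    \<and> absolutely_continuous \<mu> (star (Sop Px \<tau>) \<mu>)
    \<and> star (Rop Px \<tau>) (star (Sop Px \<tau>) \<mu>) = \<mu>"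
proof -
  interpret invariant_stopped_markov_chain K Px \<tau> \<mu>
    using chain stop compat mu_sets mu_finite mu_inv
    unfolding invariant_stopped_markov_chain_def stopped_markov_chain_def stopped_markov_chain_axioms_def
      invariant_markov_chain_def invariant_markov_chain_axioms_def markov_chain_laws_def
    by simp
  interpret finite_stopped_markov_chain K Px \<tau> \<mu>
  proof
    show "AE \<omega> in Px x. \<tau> \<omega> \<noteq> \<infinity>" for x
      using measurable_tau integrable_tau
      by (intro AE_finite_if_nn_integral_finite) (simp_all add: measurable_cong_sets[OF sets_Px refl])
  qed
  show ?thesis
    unfolding star_Sop_eq_\<nu>
    using measure_space_star_fun_Sop finite_measure_\<nu> emeasure_\<nu>_UNIV_neq_0 mu_nonzero
      invariant_Qop_\<nu> absolutely_continuous_\<nu> star_Rop_\<nu>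
    by simp
qed

end
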